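(* Let $A,B,C,D,E,F$ be six pairwise distinct points of $\mathbb{R}^3$, no four of which are coplanar, and let $X^*,Y^*\in\mathbb{R}^3\setminus\{A,\dots,F\}$. Consider the system of six equations in unknowns $X,Y\in\mathbb{R}^3$ $$\frac{1}{\|X-T\|^2}+\frac{1}{\|Y-T\|^2}=\frac{1}{\|X^*-T\|^2}+\frac{1}{\|Y^*-T\|^2},\qquad T\in\{A,B,C,D,E,F\}.$$ Then every solution $(X_P,Y_P)$ of this system is uniquely determined by $Y_P$: if $(X_P,Y_P)$ and $(X_Q,Y_P)$ are both solutions, then $X_P=X_Q$.
   Context: $\|\cdot\|$ is the Euclidean norm on $\mathbb{R}^3$. *)

theory Defs
  imports "HOL-Analysis.Analysis"
begin

end

theory Submission
  imports Defs
begin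

text \<open>Since the second unknown is the same in both solutions, the two equations at each point
  \<open>T\<close> cancel to \<open>1 / \<parallel>X\<^sub>P - T\<parallel>\<^sup>2 = 1 / \<parallel>X\<^sub>Q - T\<parallel>\<^sup>2\<close>, so \<open>X\<^sub>P\<close> and \<open>X\<^sub>Q\<close> are equidistant from
  every one of the six points. If \<open>X\<^sub>P \<noteq> X\<^sub>Q\<close>, the points equidistant from both form their
  perpendicular bisector plane, which would contain four of the given points.\<close>

lemma coplanar_aff_dim:
  fixes S :: "'a::euclidean_space set"
  shows "coplanar S \<longleftrightarrow> aff_dim S \<le> 2"
proof
  assume "coplanar S"
  then obtain u v w :: 'a where "aff_dim S \<le> aff_dim {u, v, w}"
    unfolding coplanar_def by (metis aff_dim_affine_hull aff_dim_subset)
  moreover have "card {u, v, w} \<le> 3"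
    by (simp add: card_insert_if)
  then have "aff_dim {u, v, w} \<le> 2"
    using aff_dim_le_card [of "{u, v, w}"] by simp
  ultimately show "aff_dim S \<le> 2"
    by linarith
next
  assume "aff_dim S \<le> 2"
  obtain B where B: "\<not> affine_dependent B" "affine hull S = affine hull B"
    using affine_basis_exists [of S] by auto
  then have "aff_dim B \<le> 2"
    using \<open>aff_dim S \<le> 2\<close> by (metis aff_dim_affine_hull)
  then have "finite B" "card B \<le> 3"
    using B by (auto simp: affine_independent_iff_card)
  then have "coplanar B"
    by (rule coplanar_small)
  then show "coplanar S"
    by (metis B(2) coplanar_affine_hull_coplanar)
qed

lemma equidistant_set_eq_hyperplane:
  fixes x y :: "'a::real_inner"
  shows "{z. dist x z = dist y z} = {z. (x - y) \<bullet> z = (x \<bullet> x - y \<bullet> y) / 2}"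
proof (rule Collect_cong)
  fix z
  have "dist x z = dist y z \<longleftrightarrow> (x - z) \<bullet> (x - z) = (y - z) \<bullet> (y - z)"
    by (simp add: dist_norm norm_eq)
  also have "\<dots> \<longleftrightarrow> x \<bullet> x - 2 * (x \<bullet> z) = y \<bullet> y - 2 * (y \<bullet> z)"
    by (simp add: inner_diff_left inner_diff_right inner_commute)
  also have "\<dots> \<longleftrightarrow> (x - y) \<bullet> z = (x \<bullet> x - y \<bullet> y) / 2"
    by (auto simp: inner_diff_left)
  finally show "dist x z = dist y z \<longleftrightarrow> (x - y) \<bullet> z = (x \<bullet> x - y \<bullet> y) / 2" .
qed

lemma aff_dim_equidistant_set:
  fixes x y :: "'a::euclidean_space"
  assumes "x \<noteq> y"
  shows "aff_dim {z. dist x z = dist y z} = DIM('a) - 1"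
  unfolding equidistant_set_eq_hyperplane using assms by (subst aff_dim_hyperplane) auto

lemma eq_if_equidistant_from_noncoplanar:
  fixes x y :: "'a::euclidean_space"
  assumes "DIM('a) \<le> 3" and "\<not> coplanar S" and "\<forall>t\<in>S. dist x t = dist y t"
  shows "x = y"
proof (rule ccontr)
  assume "x \<noteq> y"
  have "S \<subseteq> {z. dist x z = dist y z}"
    using assms(3) by auto
  then have "aff_dim S \<le> aff_dim {z. dist x z = dist y z}"
    by (rule aff_dim_subset)
  also have "\<dots> \<le> 2"
    using \<open>x \<noteq> y\<close> assms(1) by (simp add: aff_dim_equidistant_set)
  finally show False
    using assms(2) by (simp add: coplanar_aff_dim)
qed

text \<open>No positivity is needed because \<open>1 / 0 = 0\<close>.\<close>

lemma inverse_square_eq_iff: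
  fixes a b :: real
  assumes "0 \<le> a" "0 \<le> b"
  shows "1 / a\<^sup>2 = 1 / b\<^sup>2 \<longleftrightarrow> a = b"
  using assms by simp

theorem lemma1:
  fixes A B C D E F Xs Ys XP XQ YP :: "real^3"
  assumes distinct: "distinct [A, B, C, D, E, F]"
    and no_four_coplanar:
      "\<forall>S. S \<subseteq> {A, B, C, D, E, F} \<and> card S = 4 \<longrightarrow> \<not> coplanar S"
    and Xs: "Xs \<notin> {A, B, C, D, E, F}" and Ys: "Ys \<notin> {A, B, C, D, E, F}"
    and XP: "XP \<notin> {A, B, C, D, E, F}" and XQ: "XQ \<notin> {A, B, C, D, E, F}"
    and YP: "YP \<notin> {A, B, C, D, E, F}"
    and solP: "\<forall>T\<in>{A, B, C, D, E, F}.
        1 / (norm (XP - T))\<^sup>2 + 1 / (norm (YP - T))\<^sup>2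
      = 1 / (norm (Xs - T))\<^sup>2 + 1 / (norm (Ys - T))\<^sup>2"
    and solQ: "\<forall>T\<in>{A, B, C, D, E, F}.
        1 / (norm (XQ - T))\<^sup>2 + 1 / (norm (YP - T))\<^sup>2
      = 1 / (norm (Xs - T))\<^sup>2 + 1 / (norm (Ys - T))\<^sup>2"
  shows "XP = XQ"
proof -
  have "\<not> coplanar {A, B, C, D}"
    using no_four_coplanar distinct by auto
  moreover have "dist XP T = dist XQ T" if "T \<in> {A, B, C, D}" for T
  proof -
    have T: "T \<in> {A, B, C, D, E, F}"
      using that by auto
    have "1 / (norm (XP - T))\<^sup>2 = 1 / (norm (XQ - T))\<^sup>2"
      using solP [rule_format, OF T] solQ [rule_format, OF T] by linarith
    then show ?thesis
      by (simp add: dist_norm inverse_square_eq_iff)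
  qed
  ultimately show ?thesis
    by (intro eq_if_equidistant_from_noncoplanar [of "{A, B, C, D}"]) auto
qed

end
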